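(* Let $g:\mathbb R\times\mathbb R_+\to\mathbb R_+$ be non-decreasing and locally Lipschitz in each of its variables, with $g(0,0)=0$ and $\int_1^\infty s^{-1-p}g(s,s^{p/q})\,ds<\infty$ for some $p,q>0$. Let $u:\Omega\to\mathbb R$ and $v:\Omega\to\mathbb R_+$ be measurable; for $s>0$ and $w\in\{u,v\}$ set $E_w(s):=\{x\in\Omega:|w(x)|>s\}$ and $e_w(s):=\int_{E_w(s)}\phi_\mu\,dx$. Assume there are constants $C_u,C_v>0$ such that $e_u(s)\le C_us^{-p}$ and $e_v(s)\le C_vs^{-q}$ for all $s>0$. Then for every $s_0>0$, $$\|g(u,v)\|_{L^1(\Omega;\phi_\mu)}\le\int_{E_u^c(s_0)\cap E_v^c(s_0^{p/q})}g(u,v)\phi_\mu\,dx+2p(C_u+C_v)\int_{s_0}^\infty s^{-1-p}g(s,s^{p/q})\,ds.$$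
   Context: $\Omega\subset\mathbb R^N$ ($N\ge3$) is a bounded $C^2$ domain, $\Sigma\subset\partial\Omega$ a compact $C^2$ submanifold without boundary of dimension $k$, $d_\Sigma=\mathrm{dist}(\cdot,\Sigma)$, $\mu\le((N-k)/2)^2$, $L_\mu=\Delta+\mu d_\Sigma^{-2}$ with positive first Dirichlet eigenvalue $\lambda_\mu$, and $\phi_\mu>0$ the associated first eigenfunction; $L^1(\Omega;\phi_\mu)$ is the $L^1$ space with weight $\phi_\mu\,dx$. Complements $E^c$ are taken in $\Omega$. *)

theory Defs
  imports "HOL-Analysis.Analysis"
begin

definition loc_lipschitz_on :: "real set \<Rightarrow> (real \<Rightarrow> real) \<Rightarrow> bool" where
  "loc_lipschitz_on S f \<longleftrightarrow>
     (\<forall>x\<in>S. \<exists>e>0. \<exists>L. L-lipschitz_on (cball x e \<inter> S) f)"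

definition Eset :: "'a set \<Rightarrow> ('a \<Rightarrow> real) \<Rightarrow> real \<Rightarrow> 'a set" where
  "Eset \<Omega> w s = {x\<in>\<Omega>. \<bar>w x\<bar> > s}"

definition eset :: "'a::euclidean_space set \<Rightarrow> ('a \<Rightarrow> real) \<Rightarrow> ('a \<Rightarrow> real) \<Rightarrow> real \<Rightarrow> ennreal" where
  "eset \<Omega> \<phi> w s = (\<integral>\<^sup>+ x \<in> Eset \<Omega> w s. ennreal (\<phi> x) \<partial>lebesgue)"

end

theory Submission
  imports Defs
begin

text \<open>
  Put \<open>w = max |u| (v\<^sup>q\<^sup>/\<^sup>p)\<close> on \<open>\<Omega>\<close>. The first integration domain of the claim is
  \<open>{w \<le> s\<^sub>0}\<close>; on its complement monotonicity gives \<open>g(u,v) \<le> G(w)\<close> with the monotone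
  diagonal \<open>G(t) = g(t, t\<^sup>p\<^sup>/\<^sup>q)\<close>, and \<open>{w > b} = E\<^sub>u(b) \<union> E\<^sub>v(b\<^sup>p\<^sup>/\<^sup>q)\<close> has
  \<open>\<phi>\<close>-measure at most \<open>(C\<^sub>u + C\<^sub>v) b\<^sup>-\<^sup>p\<close>. Hence every superlevel set of \<open>G \<circ> w\<close> has
  \<open>\<phi>\<close>-measure at most the mass of the corresponding superlevel set of \<open>G\<close> under
  \<open>(C\<^sub>u + C\<^sub>v) p s\<^sup>-\<^sup>1\<^sup>-\<^sup>p ds\<close> on \<open>(s\<^sub>0, \<infinity>)\<close>, and the layer-cake formula turns this into the
  second term, even with \<open>p\<close> in place of \<open>2p\<close>.
\<close>

text \<open>No measurability of \<open>f\<close> is needed: every simple function below \<open>f\<close> splits along \<open>A\<close>.\<close>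

lemma nn_integral_split_le:
  assumes A: "A \<in> sets M"
  shows "integral\<^sup>N M f
    \<le> (\<integral>\<^sup>+ x. f x * indicator A x \<partial>M) + (\<integral>\<^sup>+ x. f x * indicator (space M - A) x \<partial>M)"
  unfolding nn_integral_def[of M f]
proof (rule SUP_least)
  fix s assume "s \<in> {g. simple_function M g \<and> g \<le> f}"
  then have s: "simple_function M s" "s \<le> f" by auto
  have s_meas: "s \<in> borel_measurable M" using s(1) by (rule borel_measurable_simple_function)
  have "integral\<^sup>S M s = integral\<^sup>N M s"
    using s(1) by (simp add: nn_integral_eq_simple_integral)
  also have "\<dots> = (\<integral>\<^sup>+ x. s x * indicator A x + s x * indicator (space M - A) x \<partial>M)"
    by (intro nn_integral_cong) (auto simp: indicator_def)
  also have "\<dots> = (\<integral>\<^sup>+ x. s x * indicator A x \<partial>M) + (\<integral>\<^sup>+ x. s x * indicator (space M - A) x \<partial>M)"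
    using A s_meas by (intro nn_integral_add) auto
  also have "\<dots> \<le> (\<integral>\<^sup>+ x. f x * indicator A x \<partial>M) + (\<integral>\<^sup>+ x. f x * indicator (space M - A) x \<partial>M)"
    using s(2) by (intro add_mono nn_integral_mono mult_right_mono) (auto simp: le_fun_def)
  finally show "integral\<^sup>S M s \<le> \<dots>" .
qed

lemma nn_integral_indicator_union_le:
  assumes [measurable]: "f \<in> borel_measurable M" "A \<in> sets M" "B \<in> sets M"
  shows "(\<integral>\<^sup>+ x. f x * indicator (A \<union> B) x \<partial>M)
    \<le> (\<integral>\<^sup>+ x. f x * indicator A x \<partial>M) + (\<integral>\<^sup>+ x. f x * indicator B x \<partial>M)"
proof -
  have "(\<integral>\<^sup>+ x. f x * indicator (A \<union> B) x \<partial>M) \<le> (\<integral>\<^sup>+ x. f x * indicator A x + f x * indicator B x \<partial>M)"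
    by (intro nn_integral_mono) (auto simp: indicator_def)
  also have "\<dots> = (\<integral>\<^sup>+ x. f x * indicator A x \<partial>M) + (\<integral>\<^sup>+ x. f x * indicator B x \<partial>M)"
    by (rule nn_integral_add) auto
  finally show ?thesis .
qed

lemma nn_integral_powr_tail:
  fixes p a :: real
  assumes p: "0 < p" and a: "0 < a"
  shows "(\<integral>\<^sup>+ s \<in> {a..}. ennreal (p * s powr (-1 - p)) \<partial>lborel) = ennreal (a powr -p)"
proof -
  have "(\<integral>\<^sup>+ s \<in> {a..}. ennreal (p * s powr (-1 - p)) \<partial>lborel) = ennreal (0 - (- (a powr -p)))"
  proof (rule nn_integral_FTC_atLeast)
    fix x assume "a \<le> x"
    then have "0 < x" using a by simp
    have "((\<lambda>s. - (s powr -p)) has_real_derivative - (-p * x powr (-p - 1))) (at x)"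
      using has_real_derivative_powr[OF \<open>0 < x\<close>, of "-p"] by (rule DERIV_minus)
    moreover have "-p - 1 = -1 - p" by simp
    ultimately show "((\<lambda>s. - (s powr -p)) has_real_derivative p * x powr (-1 - p)) (at x)"
      by simp
    show "0 \<le> p * x powr (-1 - p)" using p by simp
  next
    have "((\<lambda>s. s powr -p) \<longlongrightarrow> 0) at_top"
      using p by (intro tendsto_neg_powr filterlim_ident) auto
    then show "((\<lambda>s. - (s powr -p)) \<longlongrightarrow> 0) at_top"
      using tendsto_minus by fastforce
  qed auto
  then show ?thesis by simp
qed

lemma nn_integral_layer_cake:
  fixes f :: "'a \<Rightarrow> real"
  assumes "sigma_finite_measure M" and [measurable]: "f \<in> borel_measurable M"
    and nonneg: "\<And>x. x \<in> space M \<Longrightarrow> 0 \<le> f x"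
  shows "(\<integral>\<^sup>+ x. ennreal (f x) \<partial>M) = (\<integral>\<^sup>+ l \<in> {0..}. emeasure M {x \<in> space M. l < f x} \<partial>lborel)"
proof -
  interpret pair_sigma_finite M lborel
    using assms(1) by (intro pair_sigma_finite.intro sigma_finite_lborel)
  have level_integral: "(\<integral>\<^sup>+ l. indicator {x \<in> space M. l < f x} x * indicator {0..} l \<partial>lborel) = f x"
    if x: "x \<in> space M" for x
  proof -
    have "(\<integral>\<^sup>+ l. indicator {x \<in> space M. l < f x} x * indicator {0..} l \<partial>lborel)
        = (\<integral>\<^sup>+ l. indicator {0..<f x} l \<partial>lborel)"
      using x by (intro nn_integral_cong) (auto simp: indicator_def)
    then show ?thesis using nonneg x by simp
  qed
  have "(\<integral>\<^sup>+ x. ennreal (f x) \<partial>M)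
      = (\<integral>\<^sup>+ x. (\<integral>\<^sup>+ l. indicator {x \<in> space M. l < f x} x * indicator {0..} l \<partial>lborel) \<partial>M)"
    by (intro nn_integral_cong) (simp add: level_integral)
  also have "\<dots> = (\<integral>\<^sup>+ l. (\<integral>\<^sup>+ x. indicator {x \<in> space M. l < f x} x * indicator {0..} l \<partial>M) \<partial>lborel)"
  proof (rule Fubini'[symmetric])
    have "(\<lambda>(x, l). indicator {x \<in> space M. l < f x} x * indicator {0..} l :: ennreal)
        = (\<lambda>xl. indicator {xl \<in> space (M \<Otimes>\<^sub>M lborel). 0 \<le> snd xl \<and> snd xl < f (fst xl)} xl)"
      by (auto simp: indicator_def fun_eq_iff space_pair_measure)
    then show "(\<lambda>(x, l). indicator {x \<in> space M. l < f x} x * indicator {0..} l :: ennreal)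
        \<in> borel_measurable (M \<Otimes>\<^sub>M lborel)"
      by simp
  qed
  also have "\<dots> = (\<integral>\<^sup>+ l \<in> {0..}. emeasure M {x \<in> space M. l < f x} \<partial>lborel)"
    by (intro nn_integral_cong) (simp add: nn_integral_multc)
  finally show ?thesis .
qed

lemma le_ennreal_powr_at_left:
  fixes a C p :: real
  assumes a: "0 < a" and below: "\<And>b. 0 < b \<Longrightarrow> b < a \<Longrightarrow> x \<le> ennreal (C * b powr -p)"
  shows "x \<le> ennreal (C * a powr -p)"
proof (rule tendsto_le[of "at_left a"])
  have "((\<lambda>b. C * b powr -p) \<longlongrightarrow> C * a powr -p) (at_left a)"
    using a by (intro tendsto_intros) auto
  then show "((\<lambda>b. ennreal (C * b powr -p)) \<longlongrightarrow> ennreal (C * a powr -p)) (at_left a)"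
    by (rule tendsto_ennrealI)
  show "\<forall>\<^sub>F b in at_left a. x \<le> ennreal (C * b powr -p)"
    using eventually_at_left_real[OF a] by eventually_elim (simp add: below)
qed auto

text \<open>
  Since \<open>G\<close> is monotone, \<open>{s > s\<^sub>0. l < G s}\<close> is a ray from some \<open>a \<ge> s\<^sub>0\<close>; the tail bound
  just below \<open>a\<close> controls the level set, and \<open>C a\<^sup>-\<^sup>p\<close> is the mass of \<open>[a, \<infinity>)\<close>.
\<close>

lemma emeasure_superlevel_le_powr_tail:
  fixes W :: "'a \<Rightarrow> real" and G :: "real \<Rightarrow> real"
  assumes [measurable]: "W \<in> borel_measurable M" and G: "mono G"
    and s0: "0 < s0" and p: "0 < p" and C: "0 \<le> C"
    and tail: "\<And>b. 0 < b \<Longrightarrow> emeasure M {x \<in> space M. b < W x} \<le> ennreal (C * b powr -p)"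
  shows "emeasure M {x \<in> space M. s0 < W x \<and> l < G (W x)}
    \<le> (\<integral>\<^sup>+ s \<in> {s. s0 < s \<and> l < G s}. ennreal (C * p * s powr (-1 - p)) \<partial>lborel)"
proof -
  define T where "T = {s. s0 < s \<and> l < G s}"
  show ?thesis
  proof (cases "T = {}")
    case True
    then have "{x \<in> space M. s0 < W x \<and> l < G (W x)} = {}" by (auto simp: T_def)
    then show ?thesis by (metis emeasure_empty zero_le)
  next
    case False
    define a where "a = Inf T"
    have bdd: "bdd_below T" by (auto simp: T_def intro!: bdd_belowI[of _ s0])
    have "s0 \<le> a" unfolding a_def using False by (intro cInf_greatest) (auto simp: T_def)
    then have "0 < a" using s0 by simp
    have above_a: "s \<in> T" if s: "a < s" for s
    proof -
      obtain t where "t \<in> T" "t < s" using cInf_less_iff[OF False bdd, of s] s unfolding a_def by blast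
      then show ?thesis using monoD[OF G, of t s] by (auto simp: T_def)
    qed
    have below_a: "emeasure M {x \<in> space M. s0 < W x \<and> l < G (W x)} \<le> ennreal (C * b powr -p)"
      if b: "0 < b" "b < a" for b
    proof -
      have "{x \<in> space M. s0 < W x \<and> l < G (W x)} \<subseteq> {x \<in> space M. b < W x}"
        using cInf_lower[OF _ bdd] b by (force simp: T_def a_def)
      moreover have "{x \<in> space M. b < W x} \<in> sets M" by measurable
      ultimately show ?thesis using tail[OF \<open>0 < b\<close>] by (meson emeasure_mono order_trans)
    qed
    have "emeasure M {x \<in> space M. s0 < W x \<and> l < G (W x)} \<le> ennreal (C * a powr -p)"
      using \<open>0 < a\<close> below_a by (rule le_ennreal_powr_at_left)
    also have "\<dots> = ennreal C * (\<integral>\<^sup>+ s \<in> {a..}. ennreal (p * s powr (-1 - p)) \<partial>lborel)"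
      using nn_integral_powr_tail[OF p \<open>0 < a\<close>] C by (simp add: ennreal_mult)
    also have "\<dots> = (\<integral>\<^sup>+ s \<in> {a..}. ennreal (C * p * s powr (-1 - p)) \<partial>lborel)"
      using C p by (subst nn_integral_cmult[symmetric]) (auto intro!: nn_integral_cong simp: ennreal_mult mult.assoc)
    also have "\<dots> \<le> (\<integral>\<^sup>+ s \<in> T. ennreal (C * p * s powr (-1 - p)) \<partial>lborel)"
      using AE_lborel_singleton[of a]
      by (intro nn_integral_mono_AE) (auto elim!: eventually_mono simp: indicator_def above_a)
    finally show ?thesis unfolding T_def .
  qed
qed

lemma nn_integral_comp_le_powr_tail:
  fixes W :: "'a \<Rightarrow> real" and G :: "real \<Rightarrow> real"
  assumes W[measurable]: "W \<in> borel_measurable M" and G: "mono G" "\<And>t. 0 \<le> G t"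
    and s0: "0 < s0" and p: "0 < p" and C: "0 \<le> C"
    and above: "AE x in M. s0 < W x"
    and tail: "\<And>b. 0 < b \<Longrightarrow> emeasure M {x \<in> space M. b < W x} \<le> ennreal (C * b powr -p)"
  shows "(\<integral>\<^sup>+ x. ennreal (G (W x)) \<partial>M)
    \<le> ennreal (p * C) * (\<integral>\<^sup>+ s \<in> {s0<..}. ennreal (s powr (-1 - p) * G s) \<partial>lborel)"
proof -
  have [measurable]: "G \<in> borel_measurable borel" using G(1) by (rule borel_measurable_mono)
  define \<mu> where "\<mu> = density lborel (\<lambda>s. ennreal (C * p * s powr (-1 - p)) * indicator {s0<..} s)"
  have [simp]: "space \<mu> = UNIV" unfolding \<mu>_def by simp
  have "emeasure M (space M) = emeasure M {x \<in> space M. s0 < W x}"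
    using above by (intro emeasure_eq_AE) auto
  also have "\<dots> < \<infinity>" using tail[OF s0] by (simp add: order.strict_trans1)
  finally interpret finite_measure M by (intro finite_measureI) simp
  have "sigma_finite_measure \<mu>"
    unfolding \<mu>_def by (subst sigma_finite_measure.sigma_finite_iff_density_finite[OF sigma_finite_lborel])
      (auto simp: indicator_def ennreal_mult_eq_top_iff)
  have level: "emeasure M {x \<in> space M. l < G (W x)} \<le> emeasure \<mu> {s \<in> space \<mu>. l < G s}" for l
  proof -
    have "emeasure M {x \<in> space M. l < G (W x)} = emeasure M {x \<in> space M. s0 < W x \<and> l < G (W x)}"
      using above by (intro emeasure_eq_AE) auto
    also have "\<dots> \<le> (\<integral>\<^sup>+ s \<in> {s. s0 < s \<and> l < G s}. ennreal (C * p * s powr (-1 - p)) \<partial>lborel)"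
      using W G(1) s0 p C tail by (rule emeasure_superlevel_le_powr_tail)
    also have "\<dots> = emeasure \<mu> {s \<in> space \<mu>. l < G s}"
      unfolding \<mu>_def by (subst emeasure_density) (auto intro!: nn_integral_cong simp: indicator_def)
    finally show ?thesis .
  qed
  have "(\<integral>\<^sup>+ x. ennreal (G (W x)) \<partial>M) = (\<integral>\<^sup>+ l \<in> {0..}. emeasure M {x \<in> space M. l < G (W x)} \<partial>lborel)"
    using sigma_finite_measure_axioms G(2) by (intro nn_integral_layer_cake) auto
  also have "\<dots> \<le> (\<integral>\<^sup>+ l \<in> {0..}. emeasure \<mu> {s \<in> space \<mu>. l < G s} \<partial>lborel)"
    by (intro nn_integral_mono mult_right_mono level) simp
  also have "\<dots> = (\<integral>\<^sup>+ s. ennreal (G s) \<partial>\<mu>)"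
    using \<open>sigma_finite_measure \<mu>\<close> G(2) by (intro nn_integral_layer_cake[symmetric]) (auto simp: \<mu>_def)
  also have "\<dots> = (\<integral>\<^sup>+ s. ennreal (p * C) * (ennreal (s powr (-1 - p) * G s) * indicator {s0<..} s) \<partial>lborel)"
    unfolding \<mu>_def using p C G(2)
    by (subst nn_integral_density) (auto intro!: nn_integral_cong simp: indicator_def ennreal_mult[symmetric])
  also have "\<dots> = ennreal (p * C) * (\<integral>\<^sup>+ s \<in> {s0<..}. ennreal (s powr (-1 - p) * G s) \<partial>lborel)"
    by (rule nn_integral_cmult) measurable
  finally show ?thesis .
qed

lemma powr_divide_le_iff:
  fixes b c p q :: real
  assumes b: "0 \<le> b" and c: "0 \<le> c" and pq: "0 < p" "0 < q"
  shows "c powr (q / p) \<le> b \<longleftrightarrow> c \<le> b powr (p / q)"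
proof
  assume "c powr (q / p) \<le> b"
  then have "(c powr (q / p)) powr (p / q) \<le> b powr (p / q)"
    using pq by (intro powr_mono2) auto
  then show "c \<le> b powr (p / q)" using c pq by (simp add: powr_powr)
next
  assume "c \<le> b powr (p / q)"
  then have "c powr (q / p) \<le> (b powr (p / q)) powr (q / p)"
    using c pq by (intro powr_mono2) auto
  then show "c powr (q / p) \<le> b" using b pq by (simp add: powr_powr)
qed

lemma le_diagonal_if_max_le:
  fixes g :: "real \<Rightarrow> real \<Rightarrow> real"
  assumes g_mono: "\<And>a a' b b'. a \<le> a' \<Longrightarrow> 0 \<le> b \<Longrightarrow> b \<le> b' \<Longrightarrow> g a b \<le> g a' b'"
    and b: "0 \<le> b" and pq: "0 < p" "0 < q" and t: "max \<bar>a\<bar> (b powr (q / p)) \<le> t"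
  shows "g a b \<le> g t (t powr (p / q))"
proof (rule g_mono)
  show "a \<le> t" using t by linarith
  have "0 \<le> t" using t abs_ge_zero[of a] by linarith
  then show "b \<le> t powr (p / q)" using t b pq powr_divide_le_iff[of t b p q] by simp
qed (use b in auto)

lemma mono_diagonal:
  fixes g :: "real \<Rightarrow> real \<Rightarrow> real"
  assumes g_mono: "\<And>a a' b b'. a \<le> a' \<Longrightarrow> 0 \<le> b \<Longrightarrow> b \<le> b' \<Longrightarrow> g a b \<le> g a' b'"
    and "0 \<le> s\<^sub>0" "0 \<le> r"
  shows "mono (\<lambda>t. g (max s\<^sub>0 t) (max s\<^sub>0 t powr r))"
  using assms by (intro monoI g_mono) (auto intro: powr_mono2)

lemma Eset_restrict_space: "Eset \<Omega> w s = {x \<in> space (restrict_space lebesgue \<Omega>). s < \<bar>w x\<bar>}"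
  by (auto simp: Eset_def space_restrict_space)

lemma eset_restrict_space:
  assumes "\<Omega> \<in> sets lebesgue"
  shows "eset \<Omega> \<phi> w s = (\<integral>\<^sup>+ x. ennreal (\<phi> x) * indicator (Eset \<Omega> w s) x \<partial>restrict_space lebesgue \<Omega>)"
  unfolding eset_def using assms
  by (subst nn_integral_restrict_space) (auto intro!: nn_integral_cong simp: Eset_def indicator_def)

lemma Eset_max_powr:
  assumes b: "0 \<le> b" and v: "\<forall>x\<in>\<Omega>. 0 \<le> v x" and pq: "0 < p" "0 < q"
  shows "{x \<in> \<Omega>. b < max \<bar>u x\<bar> (v x powr (q / p))} = Eset \<Omega> u b \<union> Eset \<Omega> v (b powr (p / q))"
  using powr_divide_le_iff[OF b _ pq] v by (auto simp: Eset_def not_le[symmetric])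

lemma weighted_measure_max_superlevel_le:
  fixes \<phi> u v :: "'a::euclidean_space \<Rightarrow> real"
  assumes \<Omega>: "\<Omega> \<in> sets lebesgue"
    and [measurable]: "u \<in> borel_measurable (restrict_space lebesgue \<Omega>)"
      "v \<in> borel_measurable (restrict_space lebesgue \<Omega>)"
      "\<phi> \<in> borel_measurable (restrict_space lebesgue \<Omega>)"
    and v_nonneg: "\<forall>x\<in>\<Omega>. 0 \<le> v x" and pq: "0 < p" "0 < q" and C: "0 \<le> C\<^sub>u" "0 \<le> C\<^sub>v"
    and eu: "\<forall>s>0. eset \<Omega> \<phi> u s \<le> ennreal (C\<^sub>u * s powr (-p))"
    and ev: "\<forall>s>0. eset \<Omega> \<phi> v s \<le> ennreal (C\<^sub>v * s powr (-q))"
    and b: "0 < b"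
  shows "(\<integral>\<^sup>+ x \<in> {x \<in> \<Omega>. b < max \<bar>u x\<bar> (v x powr (q / p))}. ennreal (\<phi> x) \<partial>restrict_space lebesgue \<Omega>)
    \<le> ennreal ((C\<^sub>u + C\<^sub>v) * b powr -p)"
proof -
  have "(\<integral>\<^sup>+ x \<in> {x \<in> \<Omega>. b < max \<bar>u x\<bar> (v x powr (q / p))}. ennreal (\<phi> x) \<partial>restrict_space lebesgue \<Omega>)
      = (\<integral>\<^sup>+ x. ennreal (\<phi> x) * indicator (Eset \<Omega> u b \<union> Eset \<Omega> v (b powr (p / q))) x
          \<partial>restrict_space lebesgue \<Omega>)"
    using b v_nonneg pq by (simp add: Eset_max_powr)
  also have "\<dots> \<le> eset \<Omega> \<phi> u b + eset \<Omega> \<phi> v (b powr (p / q))"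
    unfolding eset_restrict_space[OF \<Omega>] Eset_restrict_space
    by (rule nn_integral_indicator_union_le) measurable
  also have "\<dots> \<le> ennreal (C\<^sub>u * b powr -p) + ennreal (C\<^sub>v * (b powr (p / q)) powr -q)"
    using eu ev b by (intro add_mono) auto
  also have "\<dots> = ennreal ((C\<^sub>u + C\<^sub>v) * b powr -p)"
    using C pq by (simp add: powr_powr distrib_right ennreal_plus)
  finally show ?thesis .
qed

lemma nn_integral_max_superlevel_le:
  fixes \<phi> u v :: "'a::euclidean_space \<Rightarrow> real" and g :: "real \<Rightarrow> real \<Rightarrow> real"
  assumes \<Omega>: "\<Omega> \<in> sets lebesgue"
    and [measurable]: "u \<in> borel_measurable (restrict_space lebesgue \<Omega>)"
      "v \<in> borel_measurable (restrict_space lebesgue \<Omega>)"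
      "\<phi> \<in> borel_measurable (restrict_space lebesgue \<Omega>)"
    and \<phi>_nonneg: "\<forall>x\<in>\<Omega>. 0 \<le> \<phi> x" and v_nonneg: "\<forall>x\<in>\<Omega>. 0 \<le> v x"
    and g_nonneg: "\<And>a b. 0 \<le> b \<Longrightarrow> 0 \<le> g a b"
    and g_mono: "\<And>a a' b b'. a \<le> a' \<Longrightarrow> 0 \<le> b \<Longrightarrow> b \<le> b' \<Longrightarrow> g a b \<le> g a' b'"
    and pq: "0 < p" "0 < q" and C: "0 \<le> C\<^sub>u" "0 \<le> C\<^sub>v"
    and eu: "\<forall>s>0. eset \<Omega> \<phi> u s \<le> ennreal (C\<^sub>u * s powr (-p))"
    and ev: "\<forall>s>0. eset \<Omega> \<phi> v s \<le> ennreal (C\<^sub>v * s powr (-q))"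
    and s0: "0 < s\<^sub>0"
  shows "(\<integral>\<^sup>+ x \<in> {x \<in> \<Omega>. s\<^sub>0 < max \<bar>u x\<bar> (v x powr (q / p))}. ennreal (g (u x) (v x) * \<phi> x)
      \<partial>restrict_space lebesgue \<Omega>)
    \<le> ennreal (p * (C\<^sub>u + C\<^sub>v)) * (\<integral>\<^sup>+ s \<in> {s\<^sub>0..}. ennreal (s powr (-1 - p) * g s (s powr (p / q))) \<partial>lborel)"
proof -
  define N where "N = restrict_space lebesgue \<Omega>"
  define w where "w x = max \<bar>u x\<bar> (v x powr (q / p))" for x
  define G where "G t = g (max s\<^sub>0 t) (max s\<^sub>0 t powr (p / q))" for t
  define S where "S = {x \<in> \<Omega>. s\<^sub>0 < w x}"
  define M where "M = density N (\<lambda>x. ennreal (\<phi> x) * indicator S x)"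
  have [simp]: "space N = \<Omega>" unfolding N_def by (simp add: space_restrict_space)
  have [measurable]: "u \<in> borel_measurable N" "v \<in> borel_measurable N" "\<phi> \<in> borel_measurable N"
    by (simp_all add: N_def)
  have [measurable]: "w \<in> borel_measurable N" unfolding w_def by measurable
  have [measurable]: "S \<in> sets N"
  proof -
    have "S = {x \<in> space N. s\<^sub>0 < w x}" by (simp add: S_def)
    also have "\<dots> \<in> sets N" by measurable
    finally show ?thesis .
  qed
  have density_meas: "(\<lambda>x. ennreal (\<phi> x) * indicator S x) \<in> borel_measurable N" by measurable
  have G_mono: "mono G" unfolding G_def using g_mono s0 pq by (intro mono_diagonal) auto
  then have [measurable]: "G \<in> borel_measurable borel" by (rule borel_measurable_mono)
  have G_nonneg: "0 \<le> G t" for t unfolding G_def using g_nonneg by simp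
  have tail: "emeasure M {x \<in> space M. b < w x} \<le> ennreal ((C\<^sub>u + C\<^sub>v) * b powr -p)" if b: "0 < b" for b
  proof -
    have "emeasure M {x \<in> space M. b < w x}
        = (\<integral>\<^sup>+ x. ennreal (\<phi> x) * indicator S x * indicator {x \<in> space N. b < w x} x \<partial>N)"
      unfolding M_def space_density by (rule emeasure_density; measurable)
    also have "\<dots> \<le> (\<integral>\<^sup>+ x \<in> {x \<in> \<Omega>. b < w x}. ennreal (\<phi> x) \<partial>N)"
      by (intro nn_integral_mono) (simp add: indicator_def)
    also have "\<dots> \<le> ennreal ((C\<^sub>u + C\<^sub>v) * b powr -p)"
      unfolding w_def N_def using \<Omega> v_nonneg pq C eu ev b
      by (intro weighted_measure_max_superlevel_le) auto
    finally show ?thesis .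
  qed
  have above: "AE x in M. s\<^sub>0 < w x"
    unfolding M_def by (subst AE_density[OF density_meas]) (auto simp: S_def indicator_def)
  have dominated: "ennreal (g (u x) (v x) * \<phi> x) * indicator S x \<le> ennreal (\<phi> x) * indicator S x * ennreal (G (w x))"
    if x: "x \<in> \<Omega>" for x
  proof -
    have "g (u x) (v x) \<le> G (w x)"
      unfolding G_def
      by (rule le_diagonal_if_max_le[OF g_mono]) (use v_nonneg x pq in \<open>auto simp: w_def\<close>)
    then have "g (u x) (v x) * \<phi> x \<le> \<phi> x * G (w x)"
      using \<phi>_nonneg x by (simp add: mult.commute mult_left_mono)
    then show ?thesis
      using \<phi>_nonneg x by (simp add: indicator_def ennreal_mult'[symmetric] ennreal_leI)
  qed
  have "(\<integral>\<^sup>+ x \<in> S. ennreal (g (u x) (v x) * \<phi> x) \<partial>N)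
      \<le> (\<integral>\<^sup>+ x. ennreal (\<phi> x) * indicator S x * ennreal (G (w x)) \<partial>N)"
    using dominated by (intro nn_integral_mono) simp
  also have "\<dots> = (\<integral>\<^sup>+ x. ennreal (G (w x)) \<partial>M)"
    unfolding M_def by (rule nn_integral_density[symmetric]) measurable
  also have "\<dots> \<le> ennreal (p * (C\<^sub>u + C\<^sub>v)) * (\<integral>\<^sup>+ s \<in> {s\<^sub>0<..}. ennreal (s powr (-1 - p) * G s) \<partial>lborel)"
    using G_mono G_nonneg s0 pq(1) C above tail
    by (intro nn_integral_comp_le_powr_tail) (auto simp: M_def)
  also have "\<dots> \<le> ennreal (p * (C\<^sub>u + C\<^sub>v)) * (\<integral>\<^sup>+ s \<in> {s\<^sub>0..}. ennreal (s powr (-1 - p) * g s (s powr (p / q))) \<partial>lborel)"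
    by (intro mult_left_mono nn_integral_mono) (auto simp: indicator_def G_def)
  finally show ?thesis unfolding S_def w_def N_def .
qed

theorem lemma2p6:
  fixes \<Omega> :: "'a::euclidean_space set"
    and \<phi> :: "'a \<Rightarrow> real"
    and g :: "real \<Rightarrow> real \<Rightarrow> real"
    and u v :: "'a \<Rightarrow> real"
    and p q C\<^sub>u C\<^sub>v s\<^sub>0 :: real
  assumes dim: "DIM('a) \<ge> 3"
    and \<Omega>: "open \<Omega>" "bounded \<Omega>"
    and \<phi>_meas: "set_borel_measurable lebesgue \<Omega> \<phi>"
    and \<phi>_pos: "\<forall>x\<in>\<Omega>. \<phi> x > 0"
    and g_nonneg: "\<forall>a b. b \<ge> 0 \<longrightarrow> g a b \<ge> 0"
    and g_mono1: "\<forall>a a' b. b \<ge> 0 \<longrightarrow> a \<le> a' \<longrightarrow> g a b \<le> g a' b"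
    and g_mono2: "\<forall>a b b'. 0 \<le> b \<longrightarrow> b \<le> b' \<longrightarrow> g a b \<le> g a b'"
    and g_lip1: "\<forall>b\<ge>0. loc_lipschitz_on UNIV (\<lambda>a. g a b)"
    and g_lip2: "\<forall>a. loc_lipschitz_on {0..} (\<lambda>b. g a b)"
    and g00: "g 0 0 = 0"
    and pq: "p > 0" "q > 0"
    and g_int: "(\<integral>\<^sup>+ s \<in> {1..}. ennreal (s powr (-1 - p) * g s (s powr (p / q))) \<partial>lborel) < \<infinity>"
    and u_meas: "set_borel_measurable lebesgue \<Omega> u"
    and v_meas: "set_borel_measurable lebesgue \<Omega> v"
    and v_nonneg: "\<forall>x\<in>\<Omega>. v x \<ge> 0"
    and C: "C\<^sub>u > 0" "C\<^sub>v > 0"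
    and eu: "\<forall>s>0. eset \<Omega> \<phi> u s \<le> ennreal (C\<^sub>u * s powr (-p))"
    and ev: "\<forall>s>0. eset \<Omega> \<phi> v s \<le> ennreal (C\<^sub>v * s powr (-q))"
    and s0: "s\<^sub>0 > 0"
  shows "(\<integral>\<^sup>+ x \<in> \<Omega>. ennreal (\<bar>g (u x) (v x)\<bar> * \<phi> x) \<partial>lebesgue)
    \<le> (\<integral>\<^sup>+ x \<in> (\<Omega> - Eset \<Omega> u s\<^sub>0) \<inter> (\<Omega> - Eset \<Omega> v (s\<^sub>0 powr (p / q))).
           ennreal (g (u x) (v x) * \<phi> x) \<partial>lebesgue)
      + ennreal (2 * p * (C\<^sub>u + C\<^sub>v))
        * (\<integral>\<^sup>+ s \<in> {s\<^sub>0..}. ennreal (s powr (-1 - p) * g s (s powr (p / q))) \<partial>lborel)"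
proof -
  define N where "N = restrict_space lebesgue \<Omega>"
  define S where "S = {x \<in> \<Omega>. s\<^sub>0 < max \<bar>u x\<bar> (v x powr (q / p))}"
  have \<Omega>_sets[measurable]: "\<Omega> \<in> sets lebesgue" using \<Omega>(1) by simp
  have [measurable]: "u \<in> borel_measurable N" "v \<in> borel_measurable N" "\<phi> \<in> borel_measurable N"
    using u_meas v_meas \<phi>_meas
    unfolding N_def set_borel_measurable_def by (simp_all add: borel_measurable_restrict_space_iff)
  have "S = {x \<in> space N. s\<^sub>0 < max \<bar>u x\<bar> (v x powr (q / p))}"
    by (simp add: S_def N_def space_restrict_space)
  also have "\<dots> \<in> sets N" by measurable
  finally have S_sets: "S \<in> sets N" .
  have g_mono: "g a b \<le> g a' b'" if "a \<le> a'" "0 \<le> b" "b \<le> b'" for a a' b b'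
    using g_mono1 g_mono2 that by (meson order_trans)
  let ?f = "\<lambda>x. ennreal (g (u x) (v x) * \<phi> x)"
  let ?I = "\<integral>\<^sup>+ s \<in> {s\<^sub>0..}. ennreal (s powr (-1 - p) * g s (s powr (p / q))) \<partial>lborel"
  have "(\<integral>\<^sup>+ x \<in> \<Omega>. ennreal (\<bar>g (u x) (v x)\<bar> * \<phi> x) \<partial>lebesgue) = (\<integral>\<^sup>+ x. ?f x \<partial>N)"
    unfolding N_def using g_nonneg v_nonneg
    by (subst nn_integral_restrict_space) (auto intro!: nn_integral_cong simp: indicator_def)
  also have "\<dots> \<le> (\<integral>\<^sup>+ x \<in> S. ?f x \<partial>N) + (\<integral>\<^sup>+ x \<in> \<Omega> - S. ?f x \<partial>N)"
    using nn_integral_split_le[OF S_sets] by (simp add: N_def space_restrict_space)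
  also have "\<dots> \<le> ennreal (2 * p * (C\<^sub>u + C\<^sub>v)) * ?I
      + (\<integral>\<^sup>+ x \<in> (\<Omega> - Eset \<Omega> u s\<^sub>0) \<inter> (\<Omega> - Eset \<Omega> v (s\<^sub>0 powr (p / q))). ?f x \<partial>lebesgue)"
  proof (rule add_mono)
    have "(\<integral>\<^sup>+ x \<in> S. ?f x \<partial>N) \<le> ennreal (p * (C\<^sub>u + C\<^sub>v)) * ?I"
      unfolding S_def N_def using \<phi>_pos g_nonneg pq C eu ev s0 v_nonneg
      by (intro nn_integral_max_superlevel_le[OF \<Omega>_sets _ _ _ _ _ _ g_mono])
        (auto simp: N_def[symmetric] less_imp_le)
    also have "\<dots> \<le> ennreal (2 * p * (C\<^sub>u + C\<^sub>v)) * ?I"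
      using pq C by (intro mult_right_mono ennreal_leI) auto
    finally show "(\<integral>\<^sup>+ x \<in> S. ?f x \<partial>N) \<le> \<dots>" .
    show "(\<integral>\<^sup>+ x \<in> \<Omega> - S. ?f x \<partial>N)
        \<le> (\<integral>\<^sup>+ x \<in> (\<Omega> - Eset \<Omega> u s\<^sub>0) \<inter> (\<Omega> - Eset \<Omega> v (s\<^sub>0 powr (p / q))). ?f x \<partial>lebesgue)"
      unfolding N_def using Eset_max_powr[of s\<^sub>0 \<Omega> v p q u] s0 pq v_nonneg
      by (subst nn_integral_restrict_space) (auto intro!: nn_integral_mono simp: S_def indicator_def)
  qed
  finally show ?thesis by (simp only: add.commute)
qed
end
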